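(* Let $k \ge 3$ and $n \ge 1$ be integers and let $1 \le \rho \le n$. Suppose there exist $k-2$ mutually orthogonal latin squares of order $n$ having a common partial transversal of size $\rho$. Then there exists a $((k-1)n+\rho, k)$-packing with exactly $\rho n + D(\rho,k)$ blocks in which the largest partial parallel class has size $\rho$.
   Context: For integers $v \ge k \ge 2$, a $(v,k)$-packing is a pair $(X,\mathcal{B})$ where $X$ is a set of $v$ points and $\mathcal{B}$ is a set of $k$-subsets of $X$ (blocks) such that every pair of distinct points lies in at most one block. For integers $m \ge 0$, $D(m,k)$ denotes the maximum number of $k$-subsets of an $m$-set such that every pair of points lies in at most one of them (so $D(m,k)=0$ if $m<k$). A partial parallel class (PPC) is a set of pairwise disjoint blocks; its size is the number of blocks. "The largest PPC has size $\rho$" means the packing has a PPC of size $\rho$ but none of size $\rho+1$. A common (partial) transversal of size $\rho$ of a set of latin squares of order $n$ is a set of $\rho$ cells, no two in the same row or the same column, such that in each of the latin squares the symbols in these $\rho$ cells are pairwise distinct. *)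

theory Defs
  imports Main
begin

definition latin_square :: "nat \<Rightarrow> (nat \<Rightarrow> nat \<Rightarrow> nat) \<Rightarrow> bool" where
  "latin_square n L \<longleftrightarrow>
     (\<forall>i<n. bij_betw (\<lambda>j. L i j) {0..<n} {0..<n}) \<and>
     (\<forall>j<n. bij_betw (\<lambda>i. L i j) {0..<n} {0..<n})"

definition orthogonal :: "nat \<Rightarrow> (nat \<Rightarrow> nat \<Rightarrow> nat) \<Rightarrow> (nat \<Rightarrow> nat \<Rightarrow> nat) \<Rightarrow> bool" where
  "orthogonal n L1 L2 \<longleftrightarrow>
     inj_on (\<lambda>(i, j). (L1 i j, L2 i j)) ({0..<n} \<times> {0..<n})"

definition MOLS :: "nat \<Rightarrow> (nat \<Rightarrow> nat \<Rightarrow> nat) list \<Rightarrow> bool" where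
  "MOLS n Ls \<longleftrightarrow>
     (\<forall>L\<in>set Ls. latin_square n L) \<and>
     (\<forall>a<length Ls. \<forall>b<length Ls. a \<noteq> b \<longrightarrow> orthogonal n (Ls ! a) (Ls ! b))"

definition common_partial_transversal ::
  "nat \<Rightarrow> (nat \<Rightarrow> nat \<Rightarrow> nat) list \<Rightarrow> (nat \<times> nat) set \<Rightarrow> bool" where
  "common_partial_transversal n Ls T \<longleftrightarrow>
     T \<subseteq> {0..<n} \<times> {0..<n} \<and> inj_on fst T \<and> inj_on snd T \<and>
     (\<forall>L\<in>set Ls. inj_on (\<lambda>(i, j). L i j) T)"

definition packing :: "nat \<Rightarrow> nat \<Rightarrow> 'a set \<Rightarrow> 'a set set \<Rightarrow> bool" where
  "packing v k X B \<longleftrightarrow>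
     finite X \<and> card X = v \<and> (\<forall>b\<in>B. b \<subseteq> X \<and> card b = k) \<and>
     (\<forall>x y. x \<noteq> y \<longrightarrow> card {b\<in>B. x \<in> b \<and> y \<in> b} \<le> 1)"

definition D :: "nat \<Rightarrow> nat \<Rightarrow> nat" where
  "D m k = Max {card B | B :: nat set set. packing m k {0..<m} B}"

definition PPC :: "'a set set \<Rightarrow> 'a set set \<Rightarrow> bool" where
  "PPC B P \<longleftrightarrow> P \<subseteq> B \<and> (\<forall>b\<in>P. \<forall>c\<in>P. b \<noteq> c \<longrightarrow> b \<inter> c = {})"

definition largest_PPC_size :: "'a set set \<Rightarrow> nat \<Rightarrow> bool" where
  "largest_PPC_size B r \<longleftrightarrow>
     (\<exists>P. PPC B P \<and> finite P \<and> card P = r) \<and> \<not> (\<exists>P. PPC B P \<and> finite P \<and> card P = r + 1)"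

end

theory Submission
  imports Defs
begin

(* Read the k - 2 MOLS as a transversal design TD(k, n): the cell (i, j) gives the block made of
   its row, its column and its k - 2 symbols, each taken in its own group of n points.  Keeping
   only the rows R met by the common partial transversal T leaves a packing on (k - 1) n + |R|
   points whose blocks meet R in exactly one point, so a maximum packing on R can be added.
   Every block meets R, hence no partial parallel class has more than |R| = \<rho> blocks, and the
   blocks of the cells of T form one of that size: distinct cells of a common partial transversal
   differ in every coordinate, so their blocks are disjoint. *)

lemma packingI:
  assumes "finite X" "card X = v" "\<And>b. b \<in> B \<Longrightarrow> b \<subseteq> X \<and> card b = k"
    and "\<And>b c x y. \<lbrakk>b \<in> B; c \<in> B; x \<noteq> y; x \<in> b; y \<in> b; x \<in> c; y \<in> c\<rbrakk> \<Longrightarrow> b = c"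
  shows "packing v k X B"
proof -
  have "finite B"
    using assms(1,3) by (meson PowI finite_Pow_iff finite_subset subsetI)
  then have "card {b\<in>B. x \<in> b \<and> y \<in> b} \<le> Suc 0" if "x \<noteq> y" for x y
    using assms(4) that by (subst card_le_Suc0_iff_eq) auto
  then show ?thesis
    using assms(1-3) by (simp add: packing_def)
qed

lemma packing_finite: "packing v k X B \<Longrightarrow> finite B"
  unfolding packing_def by (meson PowI finite_Pow_iff finite_subset subsetI)

lemma packing_block_eq:
  assumes "packing v k X B" "b \<in> B" "c \<in> B" "x \<noteq> y" "x \<in> b" "y \<in> b" "x \<in> c" "y \<in> c"
  shows "b = c"
proof -
  have "finite B"
    using assms(1) by (rule packing_finite)
  moreover have "card {b\<in>B. x \<in> b \<and> y \<in> b} \<le> Suc 0"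
    using assms(1,4) by (simp add: packing_def)
  ultimately show ?thesis
    using assms(2,3,5-8) by (subst (asm) card_le_Suc0_iff_eq) auto
qed

lemma packing_image:
  assumes "packing v k X B" "bij_betw h X Y"
  shows "packing v k Y (image h ` B)"
proof (rule packingI)
  have X: "finite X" "card X = v" "\<And>b. b \<in> B \<Longrightarrow> b \<subseteq> X \<and> card b = k"
    using assms(1) by (auto simp: packing_def)
  have inj: "inj_on h X"
    using assms(2) by (simp add: bij_betw_def)
  show "finite Y" "card Y = v"
    using X(1,2) assms(2) by (auto simp: bij_betw_finite bij_betw_same_card)
  show "b' \<subseteq> Y \<and> card b' = k" if "b' \<in> image h ` B" for b'
    using that X(3) assms(2) by (auto simp: bij_betw_def card_image inj_on_subset)
  show "b' = c'"
    if blocks: "b' \<in> image h ` B" "c' \<in> image h ` B"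
      and points: "x \<noteq> y" "x \<in> b'" "y \<in> b'" "x \<in> c'" "y \<in> c'" for b' c' x y
  proof -
    obtain b c where bc: "b \<in> B" "c \<in> B" "b' = h ` b" "c' = h ` c"
      using blocks by blast
    have "b \<subseteq> X" "c \<subseteq> X"
      using X(3) bc(1,2) by auto
    then have "x \<in> h ` (b \<inter> c)" "y \<in> h ` (b \<inter> c)"
      using points(2-5) bc(3,4) inj_on_image_Int[OF inj] by auto
    then obtain x0 y0 where "x0 \<in> b \<inter> c" "y0 \<in> b \<inter> c" "x0 \<noteq> y0"
      using points(1) by blast
    then have "b = c"
      using packing_block_eq[OF assms(1) bc(1,2)] by blast
    then show ?thesis
      using bc by simp
  qed
qed

lemma card_image_blocks:
  assumes "packing v k X B" "bij_betw h X Y"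
  shows "card (image h ` B) = card B"
proof -
  have "inj_on (image h) (Pow X)"
    using assms(2) by (simp add: bij_betw_def inj_on_image_Pow)
  moreover have "B \<subseteq> Pow X"
    using assms(1) by (auto simp: packing_def)
  ultimately show ?thesis
    by (simp add: card_image inj_on_subset)
qed

lemma D_attained: "\<exists>B. packing m k {0..<m} B \<and> card B = D m k"
proof -
  let ?sizes = "{card B | B :: nat set set. packing m k {0..<m} B}"
  have "?sizes \<subseteq> card ` Pow (Pow {0..<m})"
    by (auto simp: packing_def)
  then have "finite ?sizes"
    by (rule finite_subset) simp
  moreover have "packing m k {0..<m} {}"
    by (simp add: packing_def)
  then have "?sizes \<noteq> {}"
    by blast
  ultimately have "Max ?sizes \<in> ?sizes"
    by (rule Max_in)
  then show ?thesis
    unfolding D_def by auto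
qed

lemma packing_Un:
  assumes "packing v k X B1" "packing w k Y B2" "Y \<subseteq> X"
    and "\<And>b. b \<in> B1 \<Longrightarrow> card (b \<inter> Y) \<le> 1"
  shows "packing v k X (B1 \<union> B2)"
proof (rule packingI)
  show "finite X" "card X = v"
    using assms(1) by (auto simp: packing_def)
  have "\<forall>b\<in>B1. b \<subseteq> X \<and> card b = k" "\<forall>b\<in>B2. b \<subseteq> Y \<and> card b = k"
    using assms(1,2) by (simp_all add: packing_def)
  then show "b \<subseteq> X \<and> card b = k" if "b \<in> B1 \<union> B2" for b
    using that assms(3) by blast
  show "b = c"
    if bc: "b \<in> B1 \<union> B2" "c \<in> B1 \<union> B2"
      and xy: "x \<noteq> y" "x \<in> b" "y \<in> b" "x \<in> c" "y \<in> c" for b c x y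
  proof -
    have not_in_Y: "\<not> (x \<in> Y \<and> y \<in> Y)" if "d \<in> B1" "x \<in> d" "y \<in> d" for d
    proof
      assume "x \<in> Y \<and> y \<in> Y"
      moreover have "finite d"
        using assms(1) that(1) by (meson finite_subset packing_def)
      ultimately show False
        using assms(4)[OF that(1)] that(2,3) xy(1) by (metis card_le_Suc0_iff_eq finite_Int One_nat_def IntI)
    qed
    have in_Y: "x \<in> Y \<and> y \<in> Y" if "d \<in> B2" "x \<in> d" "y \<in> d" for d
      using assms(2) that by (auto simp: packing_def)
    consider "b \<in> B1" "c \<in> B1" | "b \<in> B2" "c \<in> B2" | "b \<in> B1 \<and> c \<in> B2 \<or> b \<in> B2 \<and> c \<in> B1"
      using bc by blast
    then show ?thesis
    proof cases
      case 1
      then show ?thesis using packing_block_eq[OF assms(1)] xy by blast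
    next
      case 2
      then show ?thesis using packing_block_eq[OF assms(2)] xy by blast
    next
      case 3
      then show ?thesis using not_in_Y in_Y xy by metis
    qed
  qed
qed

lemma card_packing_Un:
  assumes "packing v k X B1" "packing w k Y B2" "k \<ge> 2"
    and "\<And>b. b \<in> B1 \<Longrightarrow> card (b \<inter> Y) \<le> 1"
  shows "card (B1 \<union> B2) = card B1 + card B2"
proof (rule card_Un_disjoint)
  show "finite B1"
    using assms(1) by (rule packing_finite)
  show "finite B2"
    using assms(2) by (rule packing_finite)
  show "B1 \<inter> B2 = {}"
  proof (rule ccontr)
    assume "B1 \<inter> B2 \<noteq> {}"
    then obtain b where "b \<in> B1" "b \<subseteq> Y" "card b = k"
      using assms(2) by (auto simp: packing_def)
    then have "card (b \<inter> Y) = k"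
      by (simp add: Int_absorb2)
    then show False
      using assms(3,4) \<open>b \<in> B1\<close> by fastforce
  qed
qed

lemma PPC_card_le:
  assumes "PPC B P" "finite Y" "\<And>b. b \<in> B \<Longrightarrow> b \<inter> Y \<noteq> {}"
  shows "card P \<le> card Y"
proof -
  define g where "g b = (SOME y. y \<in> b \<inter> Y)" for b
  have g: "g b \<in> b \<inter> Y" if "b \<in> P" for b
    using that assms(1,3) unfolding g_def PPC_def by (metis ex_in_conv someI_ex subsetD)
  have "inj_on g P"
  proof (rule inj_onI)
    fix b c assume bc: "b \<in> P" "c \<in> P" "g b = g c"
    then have "b \<inter> c \<noteq> {}"
      using g[OF bc(1)] g[OF bc(2)] by auto
    then show "b = c"
      using assms(1) bc(1,2) unfolding PPC_def by blast
  qed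
  moreover have "g ` P \<subseteq> Y"
    using g by auto
  ultimately show ?thesis
    using assms(2) by (rule card_inj_on_le)
qed

lemma largest_PPC_size_card:
  assumes "PPC B P" "finite P" "card P = card Y" "finite Y"
    and "\<And>b. b \<in> B \<Longrightarrow> b \<inter> Y \<noteq> {}"
  shows "largest_PPC_size B (card Y)"
  unfolding largest_PPC_size_def
proof
  show "\<exists>P. PPC B P \<and> finite P \<and> card P = card Y"
    using assms(1-3) by blast
  show "\<not> (\<exists>Q. PPC B Q \<and> finite Q \<and> card Q = card Y + 1)"
    using PPC_card_le[OF _ assms(4,5)] by (metis add_le_same_cancel1 not_one_le_zero)
qed

lemma latin_square_less:
  assumes "latin_square n L" "i < n" "j < n"
  shows "L i j < n"
  using assms bij_betwE by (fastforce simp: latin_square_def)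

lemma latin_square_row_inj:
  assumes "latin_square n L" "i < n" "j < n" "j' < n" "L i j = L i j'"
  shows "j = j'"
proof -
  have "inj_on (L i) {0..<n}"
    using assms(1,2) by (simp add: latin_square_def bij_betw_def)
  then show ?thesis
    using assms(3-5) by (auto dest: inj_onD)
qed

lemma latin_square_col_inj:
  assumes "latin_square n L" "i < n" "i' < n" "j < n" "L i j = L i' j"
  shows "i = i'"
proof -
  have "inj_on (\<lambda>i. L i j) {0..<n}"
    using assms(1,4) by (simp add: latin_square_def bij_betw_def)
  then show ?thesis
    using assms(2,3,5) by (auto dest: inj_onD)
qed

lemma orthogonal_inj:
  assumes "orthogonal n L1 L2" "i < n" "j < n" "i' < n" "j' < n"
    and "L1 i j = L1 i' j'" "L2 i j = L2 i' j'"
  shows "i = i' \<and> j = j'"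
  using assms inj_onD[of "\<lambda>(i, j). (L1 i j, L2 i j)" _ "(i, j)" "(i', j')"]
  by (auto simp: orthogonal_def)

lemma MOLS_latin_square: "MOLS n Ls \<Longrightarrow> a < length Ls \<Longrightarrow> latin_square n (Ls ! a)"
  by (simp add: MOLS_def)

lemma MOLS_orthogonal:
  "MOLS n Ls \<Longrightarrow> a < length Ls \<Longrightarrow> b < length Ls \<Longrightarrow> a \<noteq> b \<Longrightarrow> orthogonal n (Ls ! a) (Ls ! b)"
  by (simp add: MOLS_def)

lemma nat_less_cases_0_1:
  fixes c d :: nat
  assumes "c < d"
  obtains "c = 0" "d = 1" | a where "c = 0" "d = Suc (Suc a)" | a where "c = 1" "d = Suc (Suc a)"
    | a b where "c = Suc (Suc a)" "d = Suc (Suc b)" "a < b"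
  using assms by (metis One_nat_def Suc_less_SucD less_natE not0_implies_Suc)

definition cell_coords :: "(nat \<Rightarrow> nat \<Rightarrow> nat) list \<Rightarrow> nat \<Rightarrow> nat \<Rightarrow> nat list" where
  "cell_coords Ls i j = i # j # map (\<lambda>L. L i j) Ls"

lemma cell_coords_less:
  assumes "MOLS n Ls" "i < n" "j < n" "c < length Ls + 2"
  shows "cell_coords Ls i j ! c < n"
proof (cases c)
  case (Suc c')
  then show ?thesis
    using assms latin_square_less[OF MOLS_latin_square[OF assms(1)]]
    by (cases c') (auto simp: cell_coords_def)
qed (use assms in \<open>simp add: cell_coords_def\<close>)

lemma cell_coords_agree_twice:
  assumes "MOLS n Ls" "i < n" "j < n" "i' < n" "j' < n"
    and "c < d" "d < length Ls + 2"
    and "cell_coords Ls i j ! c = cell_coords Ls i' j' ! c"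
    and "cell_coords Ls i j ! d = cell_coords Ls i' j' ! d"
  shows "i = i' \<and> j = j'"
  using assms(6)
proof (cases rule: nat_less_cases_0_1)
  case 1
  then show ?thesis
    using assms(8,9) by (simp add: cell_coords_def)
next
  case (2 a)
  then have "i = i'" "a < length Ls" "(Ls ! a) i j = (Ls ! a) i j'"
    using assms(7-9) by (auto simp: cell_coords_def)
  then show ?thesis
    using latin_square_row_inj[OF MOLS_latin_square[OF assms(1)] assms(2,3,5)] by blast
next
  case (3 a)
  then have "j = j'" "a < length Ls" "(Ls ! a) i j = (Ls ! a) i' j"
    using assms(7-9) by (auto simp: cell_coords_def)
  then show ?thesis
    using latin_square_col_inj[OF MOLS_latin_square[OF assms(1)] assms(2,4,3)] by blast
next
  case (4 a b)
  then have "a < length Ls" "b < length Ls" "a \<noteq> b"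
    and "(Ls ! a) i j = (Ls ! a) i' j'" "(Ls ! b) i j = (Ls ! b) i' j'"
    using assms(7-9) by (auto simp: cell_coords_def)
  then show ?thesis
    using orthogonal_inj[OF MOLS_orthogonal[OF assms(1)] assms(2-5)] by blast
qed

lemma mult_add_eq_mult_addD:
  fixes n :: nat
  assumes "x < n" "y < n" "c * n + x = d * n + y"
  shows "c = d \<and> x = y"
proof -
  have "(c * n + x) div n = c" "(d * n + y) div n = d"
    using assms(1,2) by simp_all
  then show ?thesis
    using assms by (metis add_left_cancel)
qed

(* Coordinate c is placed in the group {c * n..<(c + 1) * n}; the row group is {..<n}. *)
definition td_block :: "nat \<Rightarrow> (nat \<Rightarrow> nat \<Rightarrow> nat) list \<Rightarrow> nat \<Rightarrow> nat \<Rightarrow> nat set" where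
  "td_block n Ls i j = (\<lambda>c. c * n + cell_coords Ls i j ! c) ` {..<length Ls + 2}"

lemma td_block_row_col_points: "i \<in> td_block n Ls i j" "n + j \<in> td_block n Ls i j"
proof -
  have "0 * n + cell_coords Ls i j ! 0 \<in> td_block n Ls i j"
    and "1 * n + cell_coords Ls i j ! 1 \<in> td_block n Ls i j"
    unfolding td_block_def by (rule imageI; simp)+
  then show "i \<in> td_block n Ls i j" "n + j \<in> td_block n Ls i j"
    by (simp_all add: cell_coords_def)
qed

lemma td_block_common_point:
  assumes "MOLS n Ls" "i < n" "j < n" "i' < n" "j' < n"
    and "p \<in> td_block n Ls i j" "p \<in> td_block n Ls i' j'"
  obtains c where "c < length Ls + 2" "p = c * n + cell_coords Ls i j ! c"
    and "cell_coords Ls i j ! c = cell_coords Ls i' j' ! c"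
proof -
  obtain c c' where c: "c < length Ls + 2" "c' < length Ls + 2"
    and p: "p = c * n + cell_coords Ls i j ! c" "p = c' * n + cell_coords Ls i' j' ! c'"
    using assms(6,7) by (auto simp: td_block_def)
  then have "c = c' \<and> cell_coords Ls i j ! c = cell_coords Ls i' j' ! c'"
    using mult_add_eq_mult_addD cell_coords_less assms(1-5) by metis
  then show thesis
    using that c p by blast
qed

lemma td_blocks_share_two_points:
  assumes "MOLS n Ls" "i < n" "j < n" "i' < n" "j' < n" "x \<noteq> y"
    and "x \<in> td_block n Ls i j" "y \<in> td_block n Ls i j"
    and "x \<in> td_block n Ls i' j'" "y \<in> td_block n Ls i' j'"
  shows "i = i' \<and> j = j'"
proof -
  obtain c where c: "c < length Ls + 2" "x = c * n + cell_coords Ls i j ! c"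
    and agree_c: "cell_coords Ls i j ! c = cell_coords Ls i' j' ! c"
    using td_block_common_point[OF assms(1-5,7,9)] .
  obtain d where d: "d < length Ls + 2" "y = d * n + cell_coords Ls i j ! d"
    and agree_d: "cell_coords Ls i j ! d = cell_coords Ls i' j' ! d"
    using td_block_common_point[OF assms(1-5,8,10)] .
  have "c \<noteq> d"
    using c(2) d(2) assms(6) by auto
  then have "c < d \<or> d < c"
    by linarith
  then show ?thesis
    using cell_coords_agree_twice[OF assms(1-5)] c(1) d(1) agree_c agree_d by metis
qed

lemma td_block_inter_lessThan:
  assumes "MOLS n Ls" "i < n" "j < n"
  shows "td_block n Ls i j \<inter> {..<n} = {i}"
proof -
  have "c * n + cell_coords Ls i j ! c \<in> {..<n} \<longleftrightarrow> c = 0" if "c < length Ls + 2" for c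
    using cell_coords_less[OF assms that] by (cases c) auto
  then have "td_block n Ls i j \<inter> {..<n} \<subseteq> {i}"
    by (auto simp: td_block_def cell_coords_def)
  then show ?thesis
    using td_block_row_col_points(1) assms(2) by blast
qed

lemma td_block_subset:
  assumes "MOLS n Ls" "i < n" "j < n"
  shows "td_block n Ls i j \<subseteq> insert i {n..<(length Ls + 2) * n}"
proof
  fix p assume "p \<in> td_block n Ls i j"
  then obtain c where c: "c < length Ls + 2" "p = c * n + cell_coords Ls i j ! c"
    by (auto simp: td_block_def)
  show "p \<in> insert i {n..<(length Ls + 2) * n}"
  proof (cases c)
    case 0
    then show ?thesis
      using c by (simp add: cell_coords_def)
  next
    case (Suc c')
    have "p < c * n + n"
      using c cell_coords_less[OF assms c(1)] by simp
    also have "\<dots> \<le> (length Ls + 2) * n"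
      using c(1) by (metis add.commute mult_Suc Suc_leI mult_le_mono1)
    finally show ?thesis
      using c Suc by simp
  qed
qed

lemma card_td_block:
  assumes "MOLS n Ls" "i < n" "j < n"
  shows "card (td_block n Ls i j) = length Ls + 2"
proof -
  have "inj_on (\<lambda>c. c * n + cell_coords Ls i j ! c) {..<length Ls + 2}"
    using mult_add_eq_mult_addD cell_coords_less[OF assms] by (intro inj_onI) (metis lessThan_iff)
  then show ?thesis
    by (simp add: td_block_def card_image)
qed

lemma td_block_inj:
  assumes "MOLS n Ls" "i < n" "j < n" "i' < n" "j' < n"
    and "td_block n Ls i j = td_block n Ls i' j'"
  shows "i = i' \<and> j = j'"
proof -
  have "i \<noteq> n + j"
    using assms(2) by simp
  moreover have "i \<in> td_block n Ls i' j'" "n + j \<in> td_block n Ls i' j'"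
    using td_block_row_col_points[where i=i and j=j and n=n and Ls=Ls] assms(6) by simp_all
  ultimately show ?thesis
    using td_blocks_share_two_points[OF assms(1-5)] td_block_row_col_points by blast
qed

lemma td_blocks_disjoint:
  assumes "MOLS n Ls" "i < n" "j < n" "i' < n" "j' < n"
    and "\<And>c. c < length Ls + 2 \<Longrightarrow> cell_coords Ls i j ! c \<noteq> cell_coords Ls i' j' ! c"
  shows "td_block n Ls i j \<inter> td_block n Ls i' j' = {}"
  using td_block_common_point[OF assms(1-5)] assms(6) by blast

definition td_blocks :: "nat \<Rightarrow> (nat \<Rightarrow> nat \<Rightarrow> nat) list \<Rightarrow> nat set \<Rightarrow> nat set set" where
  "td_blocks n Ls R = (\<lambda>(i, j). td_block n Ls i j) ` (R \<times> {..<n})"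

lemma td_blocksE:
  assumes "b \<in> td_blocks n Ls R"
  obtains i j where "i \<in> R" "j < n" "b = td_block n Ls i j"
  using assms by (auto simp: td_blocks_def)

lemma packing_td_blocks:
  assumes "MOLS n Ls" "R \<subseteq> {..<n}"
  shows "packing (card R + (length Ls + 1) * n) (length Ls + 2)
           (R \<union> {n..<(length Ls + 2) * n}) (td_blocks n Ls R)"
proof (rule packingI)
  have "finite R"
    using assms(2) finite_subset by blast
  moreover have "R \<inter> {n..<(length Ls + 2) * n} = {}"
    using assms(2) by auto
  ultimately show "finite (R \<union> {n..<(length Ls + 2) * n})"
    and "card (R \<union> {n..<(length Ls + 2) * n}) = card R + (length Ls + 1) * n"
    by (simp_all add: card_Un_disjoint)
  show "b \<subseteq> R \<union> {n..<(length Ls + 2) * n} \<and> card b = length Ls + 2"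
    if b: "b \<in> td_blocks n Ls R" for b
  proof -
    obtain i j where ij: "i \<in> R" "j < n" "b = td_block n Ls i j"
      using b by (rule td_blocksE)
    then have "i < n"
      using assms(2) by auto
    then show ?thesis
      using ij td_block_subset[OF assms(1)] card_td_block[OF assms(1)] by blast
  qed
  show "b = c"
    if bc: "b \<in> td_blocks n Ls R" "c \<in> td_blocks n Ls R"
      and xy: "x \<noteq> y" "x \<in> b" "y \<in> b" "x \<in> c" "y \<in> c" for b c x y
  proof -
    obtain i j i' j' where "i \<in> R" "j < n" "b = td_block n Ls i j"
      and "i' \<in> R" "j' < n" "c = td_block n Ls i' j'"
      using td_blocksE bc by metis
    then show ?thesis
      using xy assms(2) td_blocks_share_two_points[OF assms(1)] by blast
  qed
qed

lemma inj_on_td_block: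
  assumes "MOLS n Ls" "S \<subseteq> {..<n} \<times> {..<n}"
  shows "inj_on (\<lambda>(i, j). td_block n Ls i j) S"
proof (rule inj_onI)
  fix p q assume "p \<in> S" "q \<in> S"
    and "(\<lambda>(i, j). td_block n Ls i j) p = (\<lambda>(i, j). td_block n Ls i j) q"
  moreover obtain i j i' j' where "p = (i, j)" "q = (i', j')"
    by fastforce
  ultimately show "p = q"
    using assms(2) td_block_inj[OF assms(1), of i j i' j'] by auto
qed

lemma card_td_blocks:
  assumes "MOLS n Ls" "R \<subseteq> {..<n}"
  shows "card (td_blocks n Ls R) = card R * n"
proof -
  have "inj_on (\<lambda>(i, j). td_block n Ls i j) (R \<times> {..<n})"
    using assms by (auto intro: inj_on_td_block)
  then show ?thesis
    by (simp add: td_blocks_def card_image card_cartesian_product)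
qed

lemma td_blocks_inter:
  assumes "MOLS n Ls" "R \<subseteq> {..<n}" "b \<in> td_blocks n Ls R"
  obtains i where "b \<inter> R = {i}"
proof -
  obtain i j where ij: "i \<in> R" "j < n" "b = td_block n Ls i j"
    using assms(3) by (rule td_blocksE)
  then have "b \<inter> {..<n} = {i}"
    using assms(1,2) td_block_inter_lessThan by blast
  then have "b \<inter> R = {i}"
    using ij(1) assms(2) by blast
  then show thesis
    by (rule that)
qed

lemma common_partial_transversal_coords_differ:
  assumes "common_partial_transversal n Ls T" "(i, j) \<in> T" "(i', j') \<in> T"
    and "(i, j) \<noteq> (i', j')" "c < length Ls + 2"
  shows "cell_coords Ls i j ! c \<noteq> cell_coords Ls i' j' ! c"
proof -
  have fst: "inj_on fst T" and snd: "inj_on snd T"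
    and sym: "\<And>L. L \<in> set Ls \<Longrightarrow> inj_on (\<lambda>(i, j). L i j) T"
    using assms(1) by (auto simp: common_partial_transversal_def)
  show ?thesis
  proof (cases c)
    case 0
    then show ?thesis
      using inj_on_eq_iff[OF fst assms(2,3)] assms(4) by (auto simp: cell_coords_def)
  next
    case (Suc c')
    show ?thesis
    proof (cases c')
      case 0
      then show ?thesis
        using Suc inj_on_eq_iff[OF snd assms(2,3)] assms(4) by (auto simp: cell_coords_def)
    next
      case (Suc a)
      then have "Ls ! a \<in> set Ls"
        using \<open>c = Suc c'\<close> assms(5) by simp
      then show ?thesis
        using Suc \<open>c = Suc c'\<close> inj_on_eq_iff[OF sym assms(2,3)] assms(4,5) by (auto simp: cell_coords_def)
    qed
  qed
qed

lemma packing_td_blocks_Un: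
  assumes "MOLS n Ls" "R \<subseteq> {..<n}" "packing (card R) (length Ls + 2) R B"
  shows "packing (card R + (length Ls + 1) * n) (length Ls + 2)
           (R \<union> {n..<(length Ls + 2) * n}) (td_blocks n Ls R \<union> B)"
    and "card (td_blocks n Ls R \<union> B) = card R * n + card B"
proof -
  have "card (b \<inter> R) \<le> 1" if b: "b \<in> td_blocks n Ls R" for b
  proof -
    obtain i where "b \<inter> R = {i}"
      using assms(1,2) b by (rule td_blocks_inter)
    then show ?thesis
      by simp
  qed
  then show "packing (card R + (length Ls + 1) * n) (length Ls + 2)
           (R \<union> {n..<(length Ls + 2) * n}) (td_blocks n Ls R \<union> B)"
    and "card (td_blocks n Ls R \<union> B) = card R * n + card B"
    using packing_Un[OF packing_td_blocks[OF assms(1,2)] assms(3)]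
      card_packing_Un[OF packing_td_blocks[OF assms(1,2)] assms(3)] card_td_blocks[OF assms(1,2)]
    by auto
qed

lemma largest_PPC_size_td_blocks_Un:
  assumes "MOLS n Ls" "common_partial_transversal n Ls T"
    and "packing (card T) (length Ls + 2) (fst ` T) B"
  shows "largest_PPC_size (td_blocks n Ls (fst ` T) \<union> B) (card T)"
proof -
  let ?R = "fst ` T" and ?blk = "\<lambda>(i, j). td_block n Ls i j"
  have T: "T \<subseteq> {..<n} \<times> {..<n}" "inj_on fst T"
    using assms(2) by (auto simp: common_partial_transversal_def)
  then have "finite T"
    by (simp add: finite_subset)
  have R: "?R \<subseteq> {..<n}" "card ?R = card T"
    using T by (auto simp: card_image)
  have "PPC (td_blocks n Ls ?R \<union> B) (?blk ` T)"
  proof -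
    have "T \<subseteq> ?R \<times> {..<n}"
      using T(1) by force
    then have "?blk ` T \<subseteq> td_blocks n Ls ?R"
      unfolding td_blocks_def by (rule image_mono)
    moreover have "?blk p \<inter> ?blk q = {}" if "p \<in> T" "q \<in> T" "p \<noteq> q" for p q
    proof -
      obtain i j i' j' where pq: "p = (i, j)" "q = (i', j')"
        by fastforce
      then have "i < n" "j < n" "i' < n" "j' < n"
        using that(1,2) T(1) by auto
      then show ?thesis
        using td_blocks_disjoint[OF assms(1)] common_partial_transversal_coords_differ[OF assms(2)]
          that pq by simp
    qed
    ultimately show ?thesis
      unfolding PPC_def by blast
  qed
  moreover have "card (?blk ` T) = card ?R"
    using inj_on_td_block[OF assms(1) T(1)] R(2) by (simp add: card_image)
  moreover have "b \<inter> ?R \<noteq> {}" if "b \<in> td_blocks n Ls ?R \<union> B" for b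
  proof (cases "b \<in> B")
    case True
    then have "b \<subseteq> ?R" "card b = length Ls + 2"
      using assms(3) by (auto simp: packing_def)
    then have "b \<noteq> {}"
      by force
    with \<open>b \<subseteq> ?R\<close> show ?thesis
      by (simp add: Int_absorb2)
  next
    case False
    then show ?thesis
      using that td_blocks_inter[OF assms(1) R(1)] by (metis Un_iff insert_not_empty)
  qed
  ultimately have "largest_PPC_size (td_blocks n Ls ?R \<union> B) (card ?R)"
    using largest_PPC_size_card \<open>finite T\<close> by blast
  then show ?thesis
    using R(2) by simp
qed

theorem theorem5p1:
  fixes k n \<rho> :: nat
  assumes "k \<ge> 3" and "n \<ge> 1" and "1 \<le> \<rho>" and "\<rho> \<le> n"
    and "\<exists>Ls T. length Ls = k - 2 \<and> MOLS n Ls \<and>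
           common_partial_transversal n Ls T \<and> card T = \<rho>"
  shows "\<exists>(X :: nat set) B. packing ((k - 1) * n + \<rho>) k X B \<and>
           card B = \<rho> * n + D \<rho> k \<and> largest_PPC_size B \<rho>"
proof -
  obtain Ls T where Ls: "MOLS n Ls" "length Ls + 2 = k"
    and T: "common_partial_transversal n Ls T" "card T = \<rho>"
    using assms(1,5) by (metis le_add_diff_inverse2 add_leD1 numeral_Bit1 numeral_One one_add_one)
  let ?R = "fst ` T"
  have R: "?R \<subseteq> {..<n}" "card ?R = card T"
    using T(1) by (auto simp: common_partial_transversal_def card_image)
  obtain B0 where B0: "packing \<rho> k {0..<\<rho>} B0" "card B0 = D \<rho> k"
    using D_attained by blast
  obtain h where "bij_betw h {0..<\<rho>} ?R"
    using R T(2) ex_bij_betw_nat_finite finite_subset[OF R(1)] by fastforce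
  then have B: "packing (card ?R) (length Ls + 2) ?R (image h ` B0)" "card (image h ` B0) = D \<rho> k"
    using packing_image[OF B0(1)] card_image_blocks[OF B0(1)] B0(2) R T(2) Ls(2) by simp_all
  have size: "(k - 1) * n + \<rho> = card ?R + (length Ls + 1) * n"
    using Ls(2)[symmetric] R(2) T(2) by simp
  let ?B = "td_blocks n Ls ?R \<union> image h ` B0"
  have "packing ((k - 1) * n + \<rho>) k (?R \<union> {n..<k * n}) ?B"
    using packing_td_blocks_Un(1)[OF Ls(1) R(1) B(1)] unfolding size Ls(2) .
  moreover have "card ?B = \<rho> * n + D \<rho> k"
    using packing_td_blocks_Un(2)[OF Ls(1) R(1) B(1)] B(2) R(2) T(2) by simp
  moreover have "largest_PPC_size ?B \<rho>"
    using largest_PPC_size_td_blocks_Un[OF Ls(1) T(1)] B(1) R(2) T(2) by simp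
  ultimately show ?thesis
    by blast
qed

end
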